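(* Let $\Omega\subset\mathbb{C}^n$ be a bounded connected domain and let $B(\Omega)$ be a Banach space of holomorphic functions on $\Omega$ containing all polynomials on $\Omega$, such that for every $z\in\Omega$ the evaluation functional $K_z(f)=f(z)$ is bounded on $B(\Omega)$, and such that the polynomials are dense in $B(\Omega)$. Let $\{z_k\}\subset\Omega$ and $\zeta\in\partial\Omega$ with $z_k\to\zeta$ and $\|K_{z_k}\|\to\infty$. Then $$k_{z_k}=\frac{K_{z_k}}{\|K_{z_k}\|}\to 0\quad\text{weak}^*\text{ in }(B(\Omega))^*\text{ as }k\to\infty.$$
   Context: A Banach space of holomorphic functions on $\Omega$ is a vector space of holomorphic functions on $\Omega$ (pointwise operations) with a complete norm. $\|K_z\|$ is the norm in the dual space $(B(\Omega))^*$. *)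

theory Defs
  imports "HOL-Analysis.Analysis"
begin

definition holomorphic_on_n :: "(complex^'n \<Rightarrow> complex) \<Rightarrow> (complex^'n) set \<Rightarrow> bool" where
  "holomorphic_on_n f S \<longleftrightarrow>
     (\<forall>z\<in>S. \<exists>L. (f has_derivative L) (at z) \<and> (\<forall>c w. L (c *s w) = c * L w))"

inductive_set poly_fun_n :: "(complex^'n \<Rightarrow> complex) set" where
  const: "(\<lambda>z. c) \<in> poly_fun_n"
| coord: "(\<lambda>z. z $ i) \<in> poly_fun_n"
| add: "p \<in> poly_fun_n \<Longrightarrow> q \<in> poly_fun_n \<Longrightarrow> (\<lambda>z. p z + q z) \<in> poly_fun_n"
| mult: "p \<in> poly_fun_n \<Longrightarrow> q \<in> poly_fun_n \<Longrightarrow> (\<lambda>z. p z * q z) \<in> poly_fun_n"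

text \<open>Functions on \<Omega> are represented by functions on C^n vanishing outside \<Omega>.\<close>
definition restr :: "(complex^'n) set \<Rightarrow> (complex^'n \<Rightarrow> complex) \<Rightarrow> (complex^'n \<Rightarrow> complex)" where
  "restr \<Omega> f = (\<lambda>z. if z \<in> \<Omega> then f z else 0)"

definition banach_hol_space ::
  "(complex^'n) set \<Rightarrow> (complex^'n \<Rightarrow> complex) set \<Rightarrow> ((complex^'n \<Rightarrow> complex) \<Rightarrow> real) \<Rightarrow> bool" where
  "banach_hol_space \<Omega> V N \<longleftrightarrow>
     (\<forall>f\<in>V. holomorphic_on_n f \<Omega> \<and> (\<forall>z. z \<notin> \<Omega> \<longrightarrow> f z = 0)) \<and>
     (\<lambda>z. 0) \<in> V \<and>
     (\<forall>f\<in>V. \<forall>g\<in>V. (\<lambda>z. f z + g z) \<in> V) \<and>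
     (\<forall>f\<in>V. \<forall>c. (\<lambda>z. c * f z) \<in> V) \<and>
     (\<forall>f\<in>V. N f \<ge> 0 \<and> (N f = 0 \<longleftrightarrow> f = (\<lambda>z. 0))) \<and>
     (\<forall>f\<in>V. \<forall>c. N (\<lambda>z. c * f z) = cmod c * N f) \<and>
     (\<forall>f\<in>V. \<forall>g\<in>V. N (\<lambda>z. f z + g z) \<le> N f + N g) \<and>
     (\<forall>F. (\<forall>k. F k \<in> V) \<longrightarrow>
          (\<forall>e>0. \<exists>M. \<forall>m\<ge>M. \<forall>n\<ge>M. N (\<lambda>z. F m z - F n z) < e) \<longrightarrow>
          (\<exists>f\<in>V. (\<lambda>k. N (\<lambda>z. F k z - f z)) \<longlonglongrightarrow> 0))"

definition eval_norm ::
  "(complex^'n \<Rightarrow> complex) set \<Rightarrow> ((complex^'n \<Rightarrow> complex) \<Rightarrow> real) \<Rightarrow> complex^'n \<Rightarrow> real" where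
  "eval_norm V N z = (SUP f \<in> {f \<in> V. N f \<le> 1}. cmod (f z))"

end

theory Submission
  imports Defs
begin

text \<open>The normalised evaluations k_w = K_w / \<parallel>K_w\<parallel> have norm one, so
  |k_w f - k_w p| \<le> \<parallel>f - p\<parallel> uniformly in w, and f is approximated in norm by
  polynomials p. For a polynomial, p(z_k) \<rightarrow> p(\<zeta>) stays bounded while
  \<parallel>K_(z_k)\<parallel> \<rightarrow> \<infinity>, hence k_(z_k) p \<rightarrow> 0, and an \<epsilon>/2 argument transfers this to f.\<close>

lemma tendsto_zero_if_approximable:
  fixes a :: "'b \<Rightarrow> 'a::real_normed_vector"
  assumes "\<And>e. e > 0 \<Longrightarrow> \<exists>b. (b \<longlongrightarrow> 0) F \<and> (\<forall>\<^sub>F x in F. norm (a x - b x) < e)"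
  shows "(a \<longlongrightarrow> 0) F"
proof (rule tendstoI)
  fix r :: real assume "r > 0"
  then obtain b where "(b \<longlongrightarrow> 0) F" and close: "\<forall>\<^sub>F x in F. norm (a x - b x) < r / 2"
    using assms[of "r / 2"] by auto
  then have "\<forall>\<^sub>F x in F. norm (b x) < r / 2"
    using \<open>r > 0\<close> by (auto dest: tendstoD[of b 0 F "r / 2"])
  with close show "\<forall>\<^sub>F x in F. dist (a x) 0 < r"
  proof eventually_elim
    case (elim x)
    then show ?case using norm_triangle_ineq2[of "a x" "b x"] by simp
  qed
qed

lemma continuous_on_poly_fun_n: "p \<in> poly_fun_n \<Longrightarrow> continuous_on UNIV p"
  by (induction rule: poly_fun_n.induct) (auto intro!: continuous_intros)

lemma banach_hol_space_scale_mem: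
  "banach_hol_space \<Omega> V N \<Longrightarrow> f \<in> V \<Longrightarrow> (\<lambda>z. c * f z) \<in> V"
  unfolding banach_hol_space_def by blast

lemma banach_hol_space_add_mem:
  "banach_hol_space \<Omega> V N \<Longrightarrow> f \<in> V \<Longrightarrow> g \<in> V \<Longrightarrow> (\<lambda>z. f z + g z) \<in> V"
  unfolding banach_hol_space_def by blast

lemma banach_hol_space_diff_mem:
  assumes "banach_hol_space \<Omega> V N" "f \<in> V" "g \<in> V"
  shows "(\<lambda>z. f z - g z) \<in> V"
proof -
  have "(\<lambda>z. (-1) * g z) \<in> V"
    using assms(1,3) by (rule banach_hol_space_scale_mem)
  with assms(1,2) have "(\<lambda>z. f z + (-1) * g z) \<in> V"
    by (rule banach_hol_space_add_mem)
  then show ?thesis by simp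
qed

lemma banach_hol_space_norm_scale:
  "banach_hol_space \<Omega> V N \<Longrightarrow> f \<in> V \<Longrightarrow> N (\<lambda>z. c * f z) = cmod c * N f"
  unfolding banach_hol_space_def by blast

lemma banach_hol_space_norm_nonneg: "banach_hol_space \<Omega> V N \<Longrightarrow> f \<in> V \<Longrightarrow> 0 \<le> N f"
  unfolding banach_hol_space_def by blast

lemma banach_hol_space_norm_eq_0:
  "banach_hol_space \<Omega> V N \<Longrightarrow> f \<in> V \<Longrightarrow> N f = 0 \<longleftrightarrow> f = (\<lambda>z. 0)"
  unfolding banach_hol_space_def by blast

lemma norm_eval_le_eval_norm:
  assumes B: "banach_hol_space \<Omega> V N"
    and bounded_eval: "\<forall>f\<in>V. cmod (f w) \<le> C * N f"
    and "g \<in> V"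
  shows "cmod (g w) \<le> eval_norm V N w * N g"
proof (cases "N g = 0")
  case True
  then show ?thesis using banach_hol_space_norm_eq_0[OF B \<open>g \<in> V\<close>] by simp
next
  case False
  then have "N g > 0" using banach_hol_space_norm_nonneg[OF B \<open>g \<in> V\<close>] by simp
  have bdd: "bdd_above ((\<lambda>f. cmod (f w)) ` {f \<in> V. N f \<le> 1})"
  proof (rule bdd_aboveI2)
    fix f assume f: "f \<in> {f \<in> V. N f \<le> 1}"
    then have "cmod (f w) \<le> C * N f" using bounded_eval by auto
    also have "\<dots> \<le> max C 0"
      using f banach_hol_space_norm_nonneg[OF B, of f]
      by (cases "C \<ge> 0") (auto intro: mult_left_le mult_nonpos_nonneg)
    finally show "cmod (f w) \<le> max C 0" .
  qed
  define h where "h = (\<lambda>z. complex_of_real (1 / N g) * g z)"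
  have "h \<in> V"
    unfolding h_def using B \<open>g \<in> V\<close> by (rule banach_hol_space_scale_mem)
  moreover have "N h = 1"
    unfolding h_def banach_hol_space_norm_scale[OF B \<open>g \<in> V\<close>]
    using \<open>N g > 0\<close> by (simp add: norm_divide)
  ultimately have "cmod (h w) \<le> eval_norm V N w"
    unfolding eval_norm_def by (intro cSUP_upper[OF _ bdd]) auto
  moreover have "cmod (h w) = cmod (g w) / N g"
    using \<open>N g > 0\<close> unfolding h_def by (simp add: norm_divide)
  ultimately show ?thesis using \<open>N g > 0\<close> by (simp add: divide_le_eq)
qed

lemma norm_eval_divide_eval_norm_le:
  assumes "banach_hol_space \<Omega> V N" "\<forall>f\<in>V. cmod (f w) \<le> C * N f" "g \<in> V"
    and "eval_norm V N w > 0"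
  shows "cmod (g w / complex_of_real (eval_norm V N w)) \<le> N g"
  using norm_eval_le_eval_norm[OF assms(1-3)] assms(4)
  by (simp add: norm_divide divide_le_eq mult.commute)

lemma tendsto_poly_fun_n_divide_0:
  assumes "p \<in> poly_fun_n" "(z \<longlongrightarrow> \<zeta>) F" "filterlim K at_top F"
  shows "((\<lambda>k. p (z k) / complex_of_real (K k)) \<longlongrightarrow> 0) F"
proof (rule tendsto_divide_0)
  have "isCont p \<zeta>"
    using continuous_on_poly_fun_n[OF assms(1)] by (simp add: continuous_on_eq_continuous_at)
  then show "((\<lambda>k. p (z k)) \<longlongrightarrow> p \<zeta>) F"
    using assms(2) by (rule isCont_tendsto_compose)
  show "filterlim (\<lambda>k. complex_of_real (K k)) at_infinity F"
    by (rule filterlim_compose[OF filterlim_of_real_at_infinity assms(3)])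
qed

theorem proposition2p8:
  fixes \<Omega> :: "(complex^'n) set" and V :: "(complex^'n \<Rightarrow> complex) set"
    and N :: "(complex^'n \<Rightarrow> complex) \<Rightarrow> real"
    and z :: "nat \<Rightarrow> complex^'n" and \<zeta> :: "complex^'n"
  assumes "open \<Omega>" and "connected \<Omega>" and "bounded \<Omega>" and "\<Omega> \<noteq> {}"
    and "banach_hol_space \<Omega> V N"
    and polys_in: "\<forall>p\<in>poly_fun_n. restr \<Omega> p \<in> V"
    and eval_bdd: "\<forall>w\<in>\<Omega>. \<exists>C. \<forall>f\<in>V. cmod (f w) \<le> C * N f"
    and dense: "\<forall>f\<in>V. \<forall>e>0. \<exists>p\<in>poly_fun_n. N (\<lambda>w. f w - restr \<Omega> p w) < e"
    and "\<forall>k. z k \<in> \<Omega>" and "\<zeta> \<in> frontier \<Omega>" and "z \<longlonglongrightarrow> \<zeta>"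
    and "filterlim (\<lambda>k. eval_norm V N (z k)) at_top sequentially"
  shows "\<forall>f\<in>V. (\<lambda>k. f (z k) / complex_of_real (eval_norm V N (z k))) \<longlonglongrightarrow> 0"
proof (intro ballI tendsto_zero_if_approximable)
  fix f and e :: real assume "f \<in> V" "e > 0"
  then obtain p where "p \<in> poly_fun_n" and approx: "N (\<lambda>w. f w - restr \<Omega> p w) < e"
    using dense by blast
  have diff_mem: "(\<lambda>w. f w - restr \<Omega> p w) \<in> V"
    using assms(5) \<open>f \<in> V\<close> polys_in \<open>p \<in> poly_fun_n\<close> by (blast intro: banach_hol_space_diff_mem)
  have "\<forall>\<^sub>F k in sequentially. eval_norm V N (z k) > 0"
    using assms(12) by (simp add: filterlim_at_top_dense)
  then have "\<forall>\<^sub>F k in sequentially. cmod (f (z k) / complex_of_real (eval_norm V N (z k))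
      - p (z k) / complex_of_real (eval_norm V N (z k))) < e"
  proof eventually_elim
    case (elim k)
    obtain C where "\<forall>h\<in>V. cmod (h (z k)) \<le> C * N h"
      using eval_bdd assms(9) by blast
    from norm_eval_divide_eval_norm_le[OF assms(5) this diff_mem elim] show ?case
      using assms(9) approx by (simp add: restr_def diff_divide_distrib)
  qed
  with tendsto_poly_fun_n_divide_0[OF \<open>p \<in> poly_fun_n\<close> assms(11,12)]
  show "\<exists>b. b \<longlonglongrightarrow> 0 \<and> (\<forall>\<^sub>F k in sequentially.
      cmod (f (z k) / complex_of_real (eval_norm V N (z k)) - b k) < e)"
    by blast
qed

end
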